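(* Let $q$ be a prime power and $n$ a positive integer coprime to $q$, and write $n=2^{\nu_2(n)}n'$ with $n'$ odd. The following are equivalent: (i) Type-I duadic splittings of $\mathbb{Z}_n$ exist; (ii) Type-I duadic splittings of $\mathbb{Z}_n$ given by some $q$-translation $\tau_t$ exist; (iii) $0<\nu_2(n)<2\,\nu_2(q-1)$. If these hold, then there is an integer $u$ with $\max\{0,\nu_2(n)-\nu_2(q-1)\}\le u<\min\{\nu_2(n),\nu_2(q-1)\}$, and for such $u$, $\tau_{2^u n'}$ is a $q$-translation of $\mathbb{Z}_n$ (i.e. $q\cdot 2^un'\equiv 2^un'\pmod n$) and Type-I duadic splittings of $\mathbb{Z}_n$ given by $\tau_{2^un'}$ exist.
   Context: $\mathbb{Z}_n=\mathbb{Z}/n\mathbb{Z}$, $\mathbb{Z}_n^*$ its unit group. The multiplier $\mu_q:\mathbb{Z}_n\to\mathbb{Z}_n$ is $i\mapsto qi \bmod n$; a subset $P\subseteq\mathbb{Z}_n$ is $\mu_q$-invariant if $\mu_q(P)=P$. For $s\in\mathbb{Z}_n^*$ and $t\in\mathbb{Z}_n$ with $qt\equiv t\pmod n$, $\rho_{s,t}:\mathbb{Z}_n\to\mathbb{Z}_n$, $i\mapsto s(i+t)\bmod n$; $\tau_t=\rho_{1,t}$ is called a $q$-translation. Type-I duadic splittings of $\mathbb{Z}_n$ given by $\rho_{s,t}$ exist if there is a $\mu_q$-invariant $P\subseteq\mathbb{Z}_n$ such that $\mathbb{Z}_n=P\cup\rho_{s,t}(P)$ is a disjoint union; Type-I duadic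 splittings of $\mathbb{Z}_n$ exist if this holds for some such $s,t$. $\nu_2(m)$ is the $2$-adic valuation of a nonzero integer $m$, $\nu_2(0)=\infty$. *)

theory Defs
  imports "HOL-Computational_Algebra.Primes"
begin

text \<open>Z_n is modelled as {0..<n} (n > 0) with arithmetic mod n.\<close>

definition prime_power :: "nat \<Rightarrow> bool" where
  "prime_power q \<longleftrightarrow> (\<exists>p k. prime p \<and> k \<ge> 1 \<and> q = p ^ k)"

definition nu2 :: "nat \<Rightarrow> nat" where
  "nu2 m = multiplicity (2::nat) m"

definition Zn :: "nat \<Rightarrow> nat set" where
  "Zn n = {0..<n}"

definition mu :: "nat \<Rightarrow> nat \<Rightarrow> nat \<Rightarrow> nat" where
  "mu n q i = (q * i) mod n"

definition mu_invariant :: "nat \<Rightarrow> nat \<Rightarrow> nat set \<Rightarrow> bool" where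
  "mu_invariant n q P \<longleftrightarrow> mu n q ` P = P"

definition rho :: "nat \<Rightarrow> nat \<Rightarrow> nat \<Rightarrow> nat \<Rightarrow> nat" where
  "rho n s t i = (s * (i + t)) mod n"

definition tau :: "nat \<Rightarrow> nat \<Rightarrow> nat \<Rightarrow> nat" where
  "tau n t = rho n 1 t"

definition admissible :: "nat \<Rightarrow> nat \<Rightarrow> nat \<Rightarrow> nat \<Rightarrow> bool" where
  "admissible n q s t \<longleftrightarrow> s \<in> Zn n \<and> coprime s n \<and> t \<in> Zn n \<and> (q * t) mod n = t mod n"

definition q_translation :: "nat \<Rightarrow> nat \<Rightarrow> nat \<Rightarrow> bool" where
  "q_translation n q t \<longleftrightarrow> t \<in> Zn n \<and> (q * t) mod n = t mod n"

definition typeI_split_by :: "nat \<Rightarrow> nat \<Rightarrow> nat \<Rightarrow> nat \<Rightarrow> bool" where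
  "typeI_split_by n q s t \<longleftrightarrow> admissible n q s t \<and>
     (\<exists>P. P \<subseteq> Zn n \<and> mu_invariant n q P \<and>
          P \<union> rho n s t ` P = Zn n \<and> P \<inter> rho n s t ` P = {})"

definition typeI_exists :: "nat \<Rightarrow> nat \<Rightarrow> bool" where
  "typeI_exists n q \<longleftrightarrow> (\<exists>s t. typeI_split_by n q s t)"

end

theory Submission
  imports Defs "HOL-Number_Theory.Number_Theory"
begin

(* If Z_n = P + rho(P) is a disjoint splitting, rho swaps P and its complement, so every
   rho-stable subset of Z_n has even size; in particular n is even. If moreover
   2 nu2(q-1) <= nu2(n), then q t = t (mod n) forces 2^nu2(q-1) | t, and after replacing s
   by q s if necessary (allowed since P is mu_q-invariant) also 2^(nu2(q-1)+1) does not
   divide s - 1. The congruence s (a + t) = a (mod 2^nu2(n)) is then solvable, so some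
   residue class mod 2^nu2(n) is rho-stable; but it has the odd size n'.
   Conversely, for u in the stated range, 2^(u+1) divides both n and q - 1, so
   P = {x. x mod 2^(u+1) < 2^u} is mu_q-invariant, and translation by 2^u n', which is
   congruent to 2^u mod 2^(u+1), exchanges P with its complement. *)

definition flips_on :: "'a set \<Rightarrow> ('a \<Rightarrow> 'a) \<Rightarrow> 'a set \<Rightarrow> bool" where
  "flips_on A f P \<longleftrightarrow> (\<forall>x\<in>A. f x \<in> P \<longleftrightarrow> x \<notin> P)"

lemma flips_on_subset: "flips_on A f P \<Longrightarrow> B \<subseteq> A \<Longrightarrow> flips_on B f P"
  by (auto simp: flips_on_def)

lemma flips_on_comp:
  assumes "flips_on A f P" "f ` A \<subseteq> A" "\<forall>x\<in>A. g x \<in> P \<longleftrightarrow> x \<in> P"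
  shows "flips_on A (g \<circ> f) P"
  using assms by (auto simp: flips_on_def)

lemma even_card_if_flips_on:
  assumes "finite A" "inj_on f A" "f ` A \<subseteq> A" "flips_on A f P"
  shows "even (card A)"
proof -
  have "f ` (A \<inter> P) \<subseteq> A - P" "f ` (A - P) \<subseteq> A \<inter> P"
    using assms(3,4) by (auto simp: flips_on_def)
  then have "card (A \<inter> P) \<le> card (A - P)" "card (A - P) \<le> card (A \<inter> P)"
    by (metis assms(1,2) card_inj_on_le finite_Diff finite_Int Diff_subset Int_lower1 inj_on_subset)+
  moreover have "card A = card (A \<inter> P) + card (A - P)"
    using assms(1) by (rule card_Int_Diff)
  ultimately have "card A = 2 * card (A \<inter> P)" by linarith
  then show ?thesis by simp
qed

lemma partition_by_image_iff_flips_on: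
  assumes "finite A" "inj_on f A" "f ` A \<subseteq> A" "P \<subseteq> A"
  shows "P \<union> f ` P = A \<and> P \<inter> f ` P = {} \<longleftrightarrow> flips_on A f P"
proof
  assume split: "P \<union> f ` P = A \<and> P \<inter> f ` P = {}"
  have "f x \<in> P \<longleftrightarrow> x \<notin> P" if x: "x \<in> A" for x
  proof
    assume "f x \<in> P"
    with split show "x \<notin> P" by blast
  next
    assume "x \<notin> P"
    show "f x \<in> P"
    proof (rule ccontr)
      assume "f x \<notin> P"
      then have "f x \<in> f ` P"
        using split assms(3) x by blast
      then obtain y where "y \<in> P" "f y = f x" by auto
      with \<open>x \<notin> P\<close> x assms(2,4) show False
        by (metis inj_onD subsetD)
    qed
  qed
  then show "flips_on A f P"
    by (simp add: flips_on_def)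
next
  assume "flips_on A f P"
  then have into_compl: "f ` P \<subseteq> A - P" and into_P: "f ` (A - P) \<subseteq> P"
    using assms(3,4) by (auto simp: flips_on_def)
  have "A = f ` A"
    using assms(1,3,2) by (rule endo_inj_surj[symmetric])
  also have "\<dots> = f ` P \<union> f ` (A - P)"
    using assms(4) by (simp add: image_Un[symmetric] Un_Diff_cancel Un_absorb1)
  also have "\<dots> \<subseteq> f ` P \<union> P"
    using into_P by (rule Un_mono[OF order_refl])
  finally have "A \<subseteq> P \<union> f ` P" by (simp only: Un_commute)
  moreover have "P \<union> f ` P \<subseteq> A"
    using assms(4) into_compl by (simp only: Un_least subset_trans[OF _ Diff_subset])
  moreover have "P \<inter> f ` P = {}"
    using into_compl by blast
  ultimately show "P \<union> f ` P = A \<and> P \<inter> f ` P = {}"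
    by blast
qed

lemma card_residue_class:
  fixes M n a :: nat
  assumes "M dvd n" "a < M"
  shows "card {x \<in> {0..<n}. x mod M = a} = n div M"
proof -
  obtain N where n: "n = M * N" using assms(1) by blast
  have "{x \<in> {0..<n}. x mod M = a} = (\<lambda>y. a + M * y) ` {0..<N}"
  proof (intro equalityI subsetI)
    fix x assume x: "x \<in> {x \<in> {0..<n}. x mod M = a}"
    then have "x = a + M * (x div M)"
      using mod_mult_div_eq[of x M] by simp
    moreover have "x div M < N"
      using x n by (intro less_mult_imp_div_less) (simp add: mult.commute)
    ultimately show "x \<in> (\<lambda>y. a + M * y) ` {0..<N}"
      by (metis atLeastLessThan_iff image_eqI zero_le)
  next
    fix x assume "x \<in> (\<lambda>y. a + M * y) ` {0..<N}"
    then obtain y where y: "y < N" "x = a + M * y" by auto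
    have "a + M * y < M * (y + 1)" using assms(2) by simp
    also have "\<dots> \<le> M * N" using y by (intro mult_le_mono2) simp
    finally show "x \<in> {x \<in> {0..<n}. x mod M = a}"
      using y assms(2) n by simp
  qed
  moreover have "inj_on (\<lambda>y. a + M * y) {0..<N}"
    using assms(2) by (auto simp: inj_on_def)
  ultimately show ?thesis
    using n assms(2) by (simp add: card_image)
qed

lemma card_Zn: "card (Zn n) = n"
  by (simp add: Zn_def)

lemma rho_in_Zn: "n > 0 \<Longrightarrow> rho n s t x \<in> Zn n"
  by (simp add: rho_def Zn_def)

lemma inj_on_rho:
  assumes "coprime s n"
  shows "inj_on (rho n s t) (Zn n)"
proof
  fix x y assume xy: "x \<in> Zn n" "y \<in> Zn n" "rho n s t x = rho n s t y"
  then have "[s * (x + t) = s * (y + t)] (mod n)"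
    by (simp add: rho_def cong_def)
  then have "[x + t = y + t] (mod n)"
    using assms by (simp add: cong_mult_lcancel_nat)
  then have "[x = y] (mod n)"
    by (simp add: cong_add_rcancel_nat)
  then show "x = y"
    using xy by (simp add: cong_def Zn_def)
qed

lemma mu_eq_rho: "mu n q = rho n q 0"
  by (simp add: fun_eq_iff mu_def rho_def)

lemma rho_mult: "rho n (q * s) t = mu n q \<circ> rho n s t"
  by (simp add: fun_eq_iff rho_def mu_def mod_mult_right_eq mult.assoc)

lemma mu_invariant_iff:
  assumes "coprime q n" "P \<subseteq> Zn n"
  shows "mu_invariant n q P \<longleftrightarrow> (\<forall>x\<in>Zn n. mu n q x \<in> P \<longleftrightarrow> x \<in> P)"
proof
  have inj: "inj_on (mu n q) (Zn n)"
    unfolding mu_eq_rho using assms(1) by (rule inj_on_rho)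
  assume inv: "mu_invariant n q P"
  show "\<forall>x\<in>Zn n. mu n q x \<in> P \<longleftrightarrow> x \<in> P"
  proof
    fix x assume x: "x \<in> Zn n"
    have "x \<in> P" if "mu n q x \<in> P"
    proof -
      obtain y where "y \<in> P" "mu n q y = mu n q x"
        using \<open>mu n q x \<in> P\<close> inv unfolding mu_invariant_def by (metis imageE)
      with inj x assms(2) show ?thesis
        by (metis inj_onD subsetD)
    qed
    then show "mu n q x \<in> P \<longleftrightarrow> x \<in> P"
      using inv by (auto simp: mu_invariant_def)
  qed
next
  assume "\<forall>x\<in>Zn n. mu n q x \<in> P \<longleftrightarrow> x \<in> P"
  then have "mu n q ` P \<subseteq> P"
    using assms(2) by blast
  moreover have "finite P"
    using assms(2) by (rule finite_subset) (simp add: Zn_def)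
  moreover have "inj_on (mu n q) P"
    unfolding mu_eq_rho using inj_on_rho[OF assms(1)] assms(2) by (rule inj_on_subset)
  ultimately show "mu_invariant n q P"
    unfolding mu_invariant_def by (simp add: endo_inj_surj)
qed

lemma typeI_split_by_iff:
  assumes "n > 0" "coprime q n"
  shows "typeI_split_by n q s t \<longleftrightarrow> admissible n q s t \<and>
    (\<exists>P\<subseteq>Zn n. (\<forall>x\<in>Zn n. mu n q x \<in> P \<longleftrightarrow> x \<in> P) \<and> flips_on (Zn n) (rho n s t) P)"
proof (cases "admissible n q s t")
  case True
  then have cop: "coprime s n"
    by (simp add: admissible_def)
  have "P \<union> rho n s t ` P = Zn n \<and> P \<inter> rho n s t ` P = {} \<longleftrightarrow> flips_on (Zn n) (rho n s t) P"
    if "P \<subseteq> Zn n" for P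
  proof (rule partition_by_image_iff_flips_on[OF _ inj_on_rho[OF cop] _ that])
    show "finite (Zn n)" by (simp add: Zn_def)
    show "rho n s t ` Zn n \<subseteq> Zn n" using assms(1) rho_in_Zn by blast
  qed
  then have "P \<subseteq> Zn n \<and> mu_invariant n q P \<and> P \<union> rho n s t ` P = Zn n \<and> P \<inter> rho n s t ` P = {}
      \<longleftrightarrow> P \<subseteq> Zn n \<and> (\<forall>x\<in>Zn n. mu n q x \<in> P \<longleftrightarrow> x \<in> P) \<and> flips_on (Zn n) (rho n s t) P" for P
    using mu_invariant_iff[OF assms(2), of P] by blast
  then show ?thesis
    unfolding typeI_split_by_def using True by simp
qed (simp add: typeI_split_by_def)

lemma pow_nu2_dvd: "2 ^ nu2 m dvd m"
  by (simp add: nu2_def multiplicity_dvd)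

lemma odd_div_pow_nu2: "m > 0 \<Longrightarrow> odd (m div 2 ^ nu2 m)"
  using multiplicity_decompose[of m 2] by (simp add: nu2_def)

lemma not_pow_Suc_nu2_dvd: "m > 0 \<Longrightarrow> \<not> 2 ^ Suc (nu2 m) dvd m"
  using power_dvd_iff_le_multiplicity[of m 2 "Suc (nu2 m)"] by (simp add: nu2_def)

lemma pow2_dvd_factor:
  fixes m t :: nat
  assumes "m > 0" "2 ^ v dvd m * t"
  shows "2 ^ (v - nu2 m) dvd t"
proof (cases "v \<le> nu2 m")
  case False
  obtain r where m: "m = 2 ^ nu2 m * r" "odd r"
    using multiplicity_decompose'[of m 2] assms(1) unfolding nu2_def by force
  have "(2::nat) ^ v = 2 ^ nu2 m * 2 ^ (v - nu2 m)"
    using False by (simp flip: power_add)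
  moreover have "m * t = 2 ^ nu2 m * (r * t)"
    using m(1) by (metis mult.assoc)
  ultimately have "2 ^ nu2 m * 2 ^ (v - nu2 m) dvd 2 ^ nu2 m * (r * t)"
    using assms(2) by metis
  then have "2 ^ (v - nu2 m) dvd r * t"
    by simp
  moreover have "coprime (2 ^ (v - nu2 m)) r"
    using m(2) by simp
  ultimately show ?thesis
    using coprime_dvd_mult_right_iff by blast
qed simp

lemma mult_mod_eq_iff_dvd:
  fixes q t n :: nat
  assumes "q \<ge> 1"
  shows "(q * t) mod n = t mod n \<longleftrightarrow> n dvd (q - 1) * t"
proof -
  have "t \<le> q * t" using assms by simp
  then show ?thesis
    by (simp add: mod_eq_dvd_iff_nat diff_mult_distrib)
qed

lemma not_dvd_mult_pred:
  fixes d q s :: nat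
  assumes "s \<ge> 1" "d dvd s - 1" "\<not> d dvd q - 1"
  shows "\<not> d dvd q * s - 1"
proof
  assume "d dvd q * s - 1"
  moreover have "d dvd q * (s - 1)"
    using assms(2) by simp
  ultimately have "d dvd (q * s - 1) - q * (s - 1)"
    by (rule dvd_diff_nat)
  moreover have "(q * s - 1) - q * (s - 1) = q - 1"
    using assms(1) mult_le_mono2[of 1 s q] by (simp add: diff_mult_distrib2)
  ultimately show False
    using assms(3) by simp
qed

lemma gcd_pow2_dvd:
  fixes d :: nat
  assumes "\<not> 2 ^ Suc w dvd d"
  shows "gcd d (2 ^ v) dvd 2 ^ w"
proof -
  obtain r where r: "gcd d (2 ^ v) = 2 ^ r"
    using divides_primepow_nat[of 2 "gcd d (2 ^ v)" v] by auto
  then have "2 ^ r dvd d"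
    by (metis gcd_dvd1)
  then have "r \<le> w"
    using assms by (metis not_less_eq_eq power_le_dvd)
  then show ?thesis
    using r by (simp add: le_imp_power_dvd)
qed

lemma exists_fixed_residue_class:
  fixes s t M :: nat
  assumes "M > 0" "gcd (s - 1) M dvd s * t"
  shows "\<exists>a<M. (s * (a + t)) mod M = a"
proof (cases "s = 0")
  case True
  then show ?thesis using assms(1) by auto
next
  case False
  have "gcd (int (s - 1)) (int M) dvd - int (s * t)"
    using assms(2) by (metis dvd_minus_iff gcd_int_int_eq of_nat_dvd_iff)
  then obtain x where x: "[int (s - 1) * x = - int (s * t)] (mod int M)"
    using cong_solve_dvd_int by blast
  define a where "a = nat (x mod int M)"
  have a: "int a = x mod int M" "a < M"
    using assms(1) by (simp_all add: a_def nat_less_iff)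
  have "[int a = x] (mod int M)"
    using a(1) by (simp add: cong_def)
  then have "[int (s - 1) * int a = - int (s * t)] (mod int M)"
    using x by (metis cong_scalar_left cong_trans)
  then have "[int a + int (s - 1) * int a + int (s * t) = int a + - int (s * t) + int (s * t)] (mod int M)"
    by (intro cong_add cong_refl)
  moreover have "int a + int (s - 1) * int a + int (s * t) = int (s * (a + t))"
    using False by (simp add: algebra_simps of_nat_diff)
  ultimately have "[int (s * (a + t)) = int a] (mod int M)"
    by simp
  then have "[s * (a + t) = a] (mod M)"
    by (metis cong_int_iff of_nat_mult of_nat_add)
  then show ?thesis
    using a(2) by (auto simp: cong_def)
qed

lemma rho_residue_class_closed:
  assumes "M dvd n" "(s * (a + t)) mod M = a" "x mod M = a"
  shows "rho n s t x mod M = a"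
proof -
  have "rho n s t x mod M = (s * (x + t)) mod M"
    using assms(1) by (simp add: rho_def mod_mod_cancel)
  also have "\<dots> = (s * (x mod M + t)) mod M"
    by (metis mod_add_left_eq mod_mult_right_eq)
  finally show ?thesis
    using assms(2,3) by simp
qed

lemma not_flips_on_rho_if_fixed_odd_class:
  assumes "n > 0" "coprime s n" "M dvd n" "odd (n div M)" "a < M" "(s * (a + t)) mod M = a"
  shows "\<not> flips_on (Zn n) (rho n s t) P"
proof
  assume flips: "flips_on (Zn n) (rho n s t) P"
  define S where "S = {x \<in> Zn n. x mod M = a}"
  have "S \<subseteq> Zn n"
    by (auto simp: S_def)
  have "even (card S)"
  proof (rule even_card_if_flips_on)
    show "finite S"
      using \<open>S \<subseteq> Zn n\<close> by (rule finite_subset) (simp add: Zn_def)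
    show "inj_on (rho n s t) S"
      using inj_on_rho[OF assms(2)] \<open>S \<subseteq> Zn n\<close> by (rule inj_on_subset)
    show "rho n s t ` S \<subseteq> S"
      using rho_residue_class_closed[OF assms(3,6)] rho_in_Zn[OF assms(1)] by (auto simp: S_def)
    show "flips_on S (rho n s t) P"
      using flips \<open>S \<subseteq> Zn n\<close> by (rule flips_on_subset)
  qed
  moreover have "card S = n div M"
    unfolding S_def Zn_def using assms(3,5) by (rule card_residue_class)
  ultimately show False
    using assms(4) by simp
qed

lemma not_flips_on_rho_if_pow2_dvd:
  assumes "n > 0" "coprime s n" "\<not> 2 ^ Suc w dvd s - 1" "2 ^ w dvd t"
  shows "\<not> flips_on (Zn n) (rho n s t) P"
proof -
  define M :: nat where "M = 2 ^ nu2 n"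
  have "gcd (s - 1) M dvd s * t"
    unfolding M_def using gcd_pow2_dvd[OF assms(3)] assms(4) by (meson dvd_trans dvd_mult)
  then obtain a where "a < M" "(s * (a + t)) mod M = a"
    using exists_fixed_residue_class[of M] by (auto simp: M_def)
  moreover have "M dvd n" "odd (n div M)"
    unfolding M_def using assms(1) by (simp_all add: pow_nu2_dvd odd_div_pow_nu2)
  ultimately show ?thesis
    using not_flips_on_rho_if_fixed_odd_class assms(1,2) by blast
qed

lemma nu2_bounds_if_typeI_split:
  assumes "q \<ge> 2" "n > 0" "coprime n q" "typeI_split_by n q s t"
  shows "0 < nu2 n \<and> nu2 n < 2 * nu2 (q - 1)"
proof -
  have cqn: "coprime q n"
    using assms(3) by (simp add: ac_simps)
  from assms(4)[unfolded typeI_split_by_iff[OF assms(2) cqn]]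
  obtain P where adm: "admissible n q s t" and mu_pres: "\<forall>x\<in>Zn n. mu n q x \<in> P \<longleftrightarrow> x \<in> P"
    and flips: "flips_on (Zn n) (rho n s t) P"
    by (elim conjE exE) (rule that)
  have cop: "coprime s n" and qt: "(q * t) mod n = t mod n"
    using adm by (auto simp: admissible_def)
  have rho_Zn: "rho n s t ` Zn n \<subseteq> Zn n"
    using rho_in_Zn[OF assms(2)] by blast
  have "even (card (Zn n))"
    using even_card_if_flips_on[OF _ inj_on_rho[OF cop] rho_Zn flips] by (simp add: Zn_def)
  then have "even n"
    by (simp add: card_Zn)
  then have "0 < nu2 n"
    using assms(2) by (simp add: nu2_def multiplicity_gt_zero_iff)
  moreover have "\<not> 2 * nu2 (q - 1) \<le> nu2 n"
  proof
    define w where "w = nu2 (q - 1)"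
    assume "2 * nu2 (q - 1) \<le> nu2 n"
    then have "w \<le> nu2 n - w"
      by (simp add: w_def)
    have "n dvd (q - 1) * t"
      using qt assms(1) by (simp add: mult_mod_eq_iff_dvd)
    with pow_nu2_dvd have "2 ^ nu2 n dvd (q - 1) * t"
      by (rule dvd_trans)
    then have "2 ^ (nu2 n - w) dvd t"
      unfolding w_def using assms(1) by (intro pow2_dvd_factor) simp_all
    then have wt: "2 ^ w dvd t"
      using le_imp_power_dvd[OF \<open>w \<le> nu2 n - w\<close>] by (rule dvd_trans[rotated])
    have wq: "\<not> 2 ^ Suc w dvd q - 1"
      unfolding w_def using assms(1) by (intro not_pow_Suc_nu2_dvd) simp
    show False
    proof (cases "2 ^ Suc w dvd s - 1")
      case False
      then show False
        using not_flips_on_rho_if_pow2_dvd[OF assms(2) cop False wt] flips by blast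
    next
      case True
      have "s \<noteq> 0"
        using cop \<open>even n\<close> by (intro notI) simp
      then have "s \<ge> 1"
        by simp
      then have "\<not> 2 ^ Suc w dvd q * s - 1"
        using True wq by (rule not_dvd_mult_pred)
      moreover have "coprime (q * s) n"
        using cqn cop by simp
      moreover have "flips_on (Zn n) (rho n (q * s) t) P"
        unfolding rho_mult using flips rho_Zn mu_pres by (rule flips_on_comp)
      ultimately show False
        using not_flips_on_rho_if_pow2_dvd[OF assms(2) _ _ wt] by blast
    qed
  qed
  ultimately show ?thesis
    by simp
qed

lemma mod_add_half_flip:
  fixes x u :: nat
  shows "(x + 2 ^ u) mod 2 ^ Suc u < 2 ^ u \<longleftrightarrow> \<not> x mod 2 ^ Suc u < 2 ^ u"
proof -
  define M :: nat where "M = 2 ^ Suc u"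
  define r where "r = x mod M"
  have M: "M = 2 ^ u + 2 ^ u" and "r < M"
    by (simp_all add: M_def r_def)
  have "(x + 2 ^ u) mod M = (r + 2 ^ u) mod M"
    by (simp add: r_def mod_add_left_eq)
  also have "\<dots> = (if r < 2 ^ u then r + 2 ^ u else r - 2 ^ u)"
    using M \<open>r < M\<close> by (simp add: mod_if)
  finally have "(x + 2 ^ u) mod M < 2 ^ u \<longleftrightarrow> \<not> r < 2 ^ u"
    using M \<open>r < M\<close> by auto
  then show ?thesis
    by (simp only: M_def r_def)
qed

lemma typeI_split_by_tau_residues:
  fixes n q t u :: nat
  defines "M \<equiv> 2 ^ Suc u"
  assumes "n > 0" "coprime q n" "M dvd n" "M dvd q - 1" "t mod M = 2 ^ u" "q_translation n q t"
  shows "typeI_split_by n q 1 t"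
proof -
  define P where "P = {x \<in> Zn n. x mod M < 2 ^ u}"
  have "2 \<le> M"
    by (simp add: M_def)
  also have "M \<le> n"
    using assms(4,2) by (rule dvd_imp_le)
  finally have "n \<ge> 2" .
  then have "q \<ge> 1"
    using assms(3) by (cases q) simp_all
  have adm: "admissible n q 1 t"
    using assms(7) \<open>n \<ge> 2\<close> by (simp add: admissible_def q_translation_def Zn_def)
  have pres: "mu n q x \<in> P \<longleftrightarrow> x \<in> P" if "x \<in> Zn n" for x
  proof -
    have "mu n q x mod M = (q * x) mod M"
      using assms(4) by (simp add: mu_def mod_mod_cancel)
    also have "\<dots> = x mod M"
      using \<open>q \<ge> 1\<close> assms(5) by (simp add: mult_mod_eq_iff_dvd)
    finally show ?thesis
      using that assms(2) by (simp add: P_def Zn_def mu_def)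
  qed
  have flips: "flips_on (Zn n) (rho n 1 t) P"
    unfolding flips_on_def
  proof
    fix x assume "x \<in> Zn n"
    have "rho n 1 t x mod M = (x + t) mod M"
      using assms(4) by (simp add: rho_def mod_mod_cancel)
    also have "\<dots> = (x + 2 ^ u) mod M"
      using assms(6) by (metis mod_add_right_eq)
    finally show "rho n 1 t x \<in> P \<longleftrightarrow> x \<notin> P"
      using \<open>x \<in> Zn n\<close> rho_in_Zn[OF assms(2)] mod_add_half_flip[of x u]
      by (simp add: P_def M_def)
  qed
  have "P \<subseteq> Zn n"
    by (simp add: P_def)
  with adm pres flips show ?thesis
    unfolding typeI_split_by_iff[OF assms(2,3)] by (intro conjI exI[of _ P]) simp_all
qed

lemma typeI_split_by_tau_pow2_odd_part:
  fixes q n u :: nat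
  defines "t \<equiv> 2 ^ u * (n div 2 ^ nu2 n)"
  assumes "q \<ge> 2" "n > 0" "coprime n q"
    and "nu2 n \<le> u + nu2 (q - 1)" "u < nu2 n" "u < nu2 (q - 1)"
  shows "q_translation n q t \<and> typeI_split_by n q 1 t"
proof -
  define n' where "n' = n div 2 ^ nu2 n"
  have n: "n = 2 ^ nu2 n * n'"
    by (simp add: n'_def pow_nu2_dvd)
  have "odd n'"
    unfolding n'_def using assms(3) by (rule odd_div_pow_nu2)
  then obtain k where k: "n' = 2 * k + 1"
    using oddE by blast
  have "(2::nat) ^ u < 2 ^ nu2 n"
    using assms(6) by simp
  then have "t < n"
    using \<open>odd n'\<close> unfolding t_def n'_def[symmetric] by (subst n) (simp add: odd_pos)
  have "2 ^ nu2 n dvd (2::nat) ^ (u + nu2 (q - 1))"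
    using assms(5) by (rule le_imp_power_dvd)
  also have "\<dots> dvd 2 ^ u * (q - 1)"
    by (simp add: power_add pow_nu2_dvd)
  finally have "n dvd (q - 1) * t"
    unfolding t_def n'_def[symmetric] by (subst n) (simp add: mult_dvd_mono ac_simps)
  then have qtr: "q_translation n q t"
    using \<open>t < n\<close> mult_mod_eq_iff_dvd[of q t n] assms(2)
    by (simp add: q_translation_def Zn_def)
  have "(2::nat) ^ Suc u dvd 2 ^ nu2 n"
    using assms(6) by (intro le_imp_power_dvd) simp
  then have pow_dvd_n: "2 ^ Suc u dvd n"
    using pow_nu2_dvd by (rule dvd_trans)
  have "(2::nat) ^ Suc u dvd 2 ^ nu2 (q - 1)"
    using assms(7) by (intro le_imp_power_dvd) simp
  then have pow_dvd_q: "2 ^ Suc u dvd q - 1"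
    using pow_nu2_dvd by (rule dvd_trans)
  have t_mod: "t mod 2 ^ Suc u = 2 ^ u"
    by (simp add: t_def n'_def[symmetric] k algebra_simps)
  have "coprime q n"
    using assms(4) by (simp add: ac_simps)
  with qtr show ?thesis
    using typeI_split_by_tau_residues[OF assms(3) _ pow_dvd_n pow_dvd_q t_mod qtr] by blast
qed

lemma prime_power_ge_2:
  assumes "prime_power q"
  shows "q \<ge> 2"
proof -
  obtain p k where "prime p" "k \<ge> 1" "q = p ^ k"
    using assms by (auto simp: prime_power_def)
  have "2 \<le> p"
    using \<open>prime p\<close> by (rule prime_ge_2_nat)
  also have "p \<le> p ^ k"
    using \<open>2 \<le> p\<close> \<open>k \<ge> 1\<close> by (intro self_le_power) simp_all
  finally show ?thesis
    using \<open>q = p ^ k\<close> by simp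
qed

theorem theorem3p10:
  fixes q n :: nat
  assumes "prime_power q" and "n > 0" and "coprime n q"
  defines "n' \<equiv> n div 2 ^ nu2 n"
  shows "(typeI_exists n q \<longleftrightarrow> (\<exists>t. q_translation n q t \<and> typeI_split_by n q 1 t))
       \<and> ((\<exists>t. q_translation n q t \<and> typeI_split_by n q 1 t)
            \<longleftrightarrow> (0 < nu2 n \<and> nu2 n < 2 * nu2 (q - 1)))
       \<and> (typeI_exists n q \<longrightarrow>
            (\<exists>u::nat. max 0 (int (nu2 n) - int (nu2 (q - 1))) \<le> int u
                      \<and> u < min (nu2 n) (nu2 (q - 1)))
          \<and> (\<forall>u::nat. max 0 (int (nu2 n) - int (nu2 (q - 1))) \<le> int u
                      \<and> u < min (nu2 n) (nu2 (q - 1)) \<longrightarrow>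
                q_translation n q (2 ^ u * n')
              \<and> (q * (2 ^ u * n')) mod n = (2 ^ u * n') mod n
              \<and> typeI_split_by n q 1 (2 ^ u * n')))"
proof -
  let ?v = "nu2 n" and ?w = "nu2 (q - 1)"
  let ?range = "\<lambda>u::nat. max 0 (int ?v - int ?w) \<le> int u \<and> u < min ?v ?w"
  let ?by_tau = "\<exists>t. q_translation n q t \<and> typeI_split_by n q 1 t"
  have "q \<ge> 2"
    using assms(1) by (rule prime_power_ge_2)
  have bounds: "0 < ?v \<and> ?v < 2 * ?w" if "typeI_exists n q"
    using that nu2_bounds_if_typeI_split[OF \<open>q \<ge> 2\<close> assms(2,3)] by (auto simp: typeI_exists_def)
  have split: "q_translation n q (2 ^ u * n') \<and> (q * (2 ^ u * n')) mod n = (2 ^ u * n') mod n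
      \<and> typeI_split_by n q 1 (2 ^ u * n')" if "?range u" for u
    using that typeI_split_by_tau_pow2_odd_part[OF \<open>q \<ge> 2\<close> assms(2,3), of u]
    by (simp add: n'_def q_translation_def)
  have range_nonempty: "\<exists>u. ?range u" if "0 < ?v \<and> ?v < 2 * ?w"
    using that by (intro exI[of _ "?v - ?w"]) auto
  have by_tau_iff: "?by_tau \<longleftrightarrow> 0 < ?v \<and> ?v < 2 * ?w"
  proof
    assume ?by_tau
    then show "0 < ?v \<and> ?v < 2 * ?w"
      using bounds by (auto simp: typeI_exists_def)
  next
    assume "0 < ?v \<and> ?v < 2 * ?w"
    then obtain u where "?range u"
      using range_nonempty by blast
    then show ?by_tau
      using split by blast
  qed
  moreover have "typeI_exists n q \<longleftrightarrow> ?by_tau"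
    using by_tau_iff bounds by (auto simp: typeI_exists_def)
  ultimately show ?thesis
    using bounds range_nonempty split by blast
qed

end
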